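(* Consider a region discretized by the FDTD-Q scheme described in the context, with $0<\Delta t<\Delta t_{\mathrm{CFL,gen}}=2/\rho\!\left(\frac{1}{\hbar}(D_V'')^{-1/2}H(D_V'')^{-1/2}\right)$ ($\rho$ the spectral radius). Let $\mathcal{P}_\dagger^n$ ($n=0,\dots,n_t$) and $\mathcal{I}_{P\dagger}^{n+\frac12}$ ($n=0,\dots,n_t-1$) be real numbers (representing the probability of, and probability current leaving, the space outside the region) such that $\mathcal{P}_\dagger^n\ge0$ for all $n=0,\dots,n_t$, $$\frac{\mathcal{P}_\dagger^{n+1}-\mathcal{P}_\dagger^n}{\Delta t}=-\mathcal{I}_{P\dagger}^{n+\frac12},\qquad n=0,\dots,n_t-1,$$ and $\mathcal{I}_P^{n+\frac12}=-\mathcal{I}_{P\dagger}^{n+\frac12}$ for $n=0,\dots,n_t-1$. Then $\mathcal{P}^n\le\mathcal{P}_{\max}:=\mathcal{P}^0+\mathcal{P}_\dagger^0$ for all $n=0,1,\dots,n_t$.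
   Context: Fix constants $\hbar>0$, $m>0$, cell sizes $\Delta x,\Delta y,\Delta z>0$, positive integers $n_x,n_y,n_z,n_t$ and a time step $\Delta t>0$. The region is a box made of $n_x\times n_y\times n_z$ primary cells of size $\Delta x\times\Delta y\times\Delta z$, with primary nodes $(i,j,k)$, $1\le i\le n_x+1$, $1\le j\le n_y+1$, $1\le k\le n_z+1$. Let $N=(n_x+1)(n_y+1)(n_z+1)$; vectors indexed by nodes use the ordering $i+(j-1)(n_x+1)+(k-1)(n_x+1)(n_y+1)$. Real potential values $U_{i,j,k}$ are given at the nodes; $D_U$ is the $N\times N$ diagonal matrix containing them. Let $I_p$ be the $p\times p$ identity, $\tilde I_p=\mathrm{diag}(\tfrac12,1,\dots,1,\tfrac12)$ ($p\times p$), $W_p=[0_{p\times1}\ I_p]-[I_p\ 0_{p\times 1}]$ ($p\times(p+1)$), $\otimes$ the Kronecker product, and $e\{p,q\}$ the $q\times 1$ vector with $1$ in position $p$ and zeros elsewhere. Define $D_V''=\Delta x\Delta y\Delta z\,\tilde I_{n_z+1}\otimes\tilde I_{n_y+1}\otimes\tilde I_{n_x+1}$; $D=[D_x\ D_y\ D_z]$ with $D_x=-I_{n_z+1}\otimes I_{n_y+1}\otimes W_{n_x}^T$, $D_y=-I_{n_z+1}\otimes W_{n_y}^T\otimes I_{n_x+1}$, $D_z=-W_{n_z}^T\otimes I_{n_y+1}\otimes I_{n_x+1}$; $D_S''=\mathrm{diag}(\Delta y\Delta z\,\tilde I_{n_z+1}\otimes\tilde I_{n_y+1}\otimes I_{n_x},\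 \Delta x\Delta z\,\tilde I_{n_z+1}\otimes I_{n_y}\otimes\tilde I_{n_x+1},\ \Delta x\Delta y\,I_{n_z}\otimes\tilde I_{n_y+1}\otimes\tilde I_{n_x+1})$; $D_l'=\mathrm{diag}(\Delta x\, I_{n_x(n_y+1)(n_z+1)},\ \Delta y\, I_{(n_x+1)n_y(n_z+1)},\ \Delta z\, I_{(n_x+1)(n_y+1)n_z})$; $H=\frac{\hbar^2}{2m}D D_S''(D_l')^{-1}D^T+D_V''D_U$; $\mathbf{P}=\begin{bmatrix}D_V''&-\frac{\Delta t}{2\hbar}H\\-\frac{\Delta t}{2\hbar}H&D_V''\end{bmatrix}$. Boundary ("hanging") variables: $L=[L_W\ L_E\ L_S\ L_N\ L_B\ L_T]$ with $L_W=I_{n_z+1}\otimes I_{n_y+1}\otimes e\{1,n_x+1\}$, $L_E=I_{n_z+1}\otimes I_{n_y+1}\otimes e\{n_x+1,n_x+1\}$, $L_S=I_{n_z+1}\otimes e\{1,n_y+1\}\otimes I_{n_x+1}$, $L_N=I_{n_z+1}\otimes e\{n_y+1,n_y+1\}\otimes I_{n_x+1}$, $L_B=e\{1,n_z+1\}\otimes I_{n_y+1}\otimes I_{n_x+1}$, $L_T=e\{n_z+1,n_z+1\}\otimes I_{n_y+1}\otimes I_{n_x+1}$; let $M$ be the number of columns of $L$. $D_{\hat n}=\mathrm{diag}(-I_{(n_y+1)(n_z+1)},I_{(n_y+1)(n_z+1)},-I_{(n_x+1)(n_z+1)},I_{(n_x+1)(n_z+1)},-I_{(n_x+1)(n_y+1)},I_{(n_x+1)(n_y+1)})$;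 $D_{S,b}''=\mathrm{diag}(\Delta y\Delta z\,\tilde I_{n_z+1}\otimes\tilde I_{n_y+1},\ \Delta y\Delta z\,\tilde I_{n_z+1}\otimes\tilde I_{n_y+1},\ \Delta x\Delta z\,\tilde I_{n_z+1}\otimes\tilde I_{n_x+1},\ \Delta x\Delta z\,\tilde I_{n_z+1}\otimes\tilde I_{n_x+1},\ \Delta x\Delta y\,\tilde I_{n_y+1}\otimes\tilde I_{n_x+1},\ \Delta x\Delta y\,\tilde I_{n_y+1}\otimes\tilde I_{n_x+1})$; $H_\perp=\frac{\hbar^2}{2m}L D_{\hat n}D_{S,b}''$. FDTD-Q scheme: real vectors $\psi_R^n\in\mathbb{R}^N$ and $\psi_I^{n-\frac12}\in\mathbb{R}^N$ ($n=0,\dots,n_t$), and arbitrary boundary vectors $g_R^n\in\mathbb{R}^M$, $g_I^{n+\frac12}\in\mathbb{R}^M$ ($n=0,\dots,n_t-1$), satisfying for $n=0,\dots,n_t-1$: $\hbar D_V''\frac{\psi_R^{n+1}-\psi_R^n}{\Delta t}=H\psi_I^{n+\frac12}-H_\perp g_I^{n+\frac12}$ and $\hbar D_V''\frac{\psi_I^{n+\frac12}-\psi_I^{n-\frac12}}{\Delta t}=-H\psi_R^n+H_\perp g_R^n$. Let $\psi^n=\begin{bmatrix}\psi_R^n\\ \psi_I^{n-\frac12}\end{bmatrix}$, $g^{n+\frac12}=\begin{bmatrix}g_R^n\\ g_I^{n+\frac12}\end{bmatrix}$, $J_1=\begin{bmatrix}0&1\\-1&0\end{bmatrix}$. Total probability: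 $\mathcal{P}^n=(\psi^n)^T\mathbf{P}\psi^n$, $n=0,\dots,n_t$. Probability current: $\mathcal{I}_P^{n+\frac12}=\frac{2}{\hbar}\left(\frac{\psi^{n+1}+\psi^n}{2}\right)^T(J_1\otimes H_\perp)g^{n+\frac12}$, $n=0,\dots,n_t-1$. *)

theory Defs
  imports "Jordan_Normal_Form.Matrix" "Jordan_Normal_Form.Spectral_Radius"
begin

definition kron :: "'a::times mat \<Rightarrow> 'a mat \<Rightarrow> 'a mat" where
  "kron A B = mat (dim_row A * dim_row B) (dim_col A * dim_col B)
     (\<lambda>(i,j). A $$ (i div dim_row B, j div dim_col B) * B $$ (i mod dim_row B, j mod dim_col B))"

definition hcat :: "'a::zero mat \<Rightarrow> 'a mat \<Rightarrow> 'a mat" where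
  "hcat A B = mat (dim_row A) (dim_col A + dim_col B)
     (\<lambda>(i,j). if j < dim_col A then A $$ (i,j) else B $$ (i, j - dim_col A))"

fun hcat_list :: "'a::zero mat list \<Rightarrow> 'a mat" where
  "hcat_list [] = 0\<^sub>m 0 0"
| "hcat_list [A] = A"
| "hcat_list (A # As) = hcat A (hcat_list As)"

definition bdiag :: "'a::zero mat \<Rightarrow> 'a mat \<Rightarrow> 'a mat" where
  "bdiag A B = four_block_mat A (0\<^sub>m (dim_row A) (dim_col B)) (0\<^sub>m (dim_row B) (dim_col A)) B"

fun bdiag_list :: "'a::zero mat list \<Rightarrow> 'a mat" where
  "bdiag_list [] = 0\<^sub>m 0 0"
| "bdiag_list [A] = A"
| "bdiag_list (A # As) = bdiag A (bdiag_list As)"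

definition diag_inv :: "real mat \<Rightarrow> real mat" where
  "diag_inv A = mat_diag (dim_row A) (\<lambda>i. 1 / A $$ (i,i))"

definition diag_inv_sqrt :: "real mat \<Rightarrow> real mat" where
  "diag_inv_sqrt A = mat_diag (dim_row A) (\<lambda>i. 1 / sqrt (A $$ (i,i)))"

section \<open>Elementary matrices of the paper (1-based in the paper, 0-based here)\<close>

definition Itil :: "nat \<Rightarrow> real mat" where
  "Itil p = mat_diag p (\<lambda>i. if i = 0 \<or> i = p - 1 then 1/2 else 1)"

definition Wm :: "nat \<Rightarrow> real mat" where
  "Wm p = mat p (p+1) (\<lambda>(i,j). (if j = i + 1 then 1 else 0) - (if j = i then 1 else 0))"

text \<open>e{p,q}: q x 1 column with a 1 in (1-based) position p.\<close>
definition ev :: "nat \<Rightarrow> nat \<Rightarrow> real mat" where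
  "ev p q = mat q 1 (\<lambda>(i,j). if i = p - 1 then 1 else 0)"

definition Im :: "nat \<Rightarrow> real mat" where
  "Im p = 1\<^sub>m p"

definition Nn :: "nat \<Rightarrow> nat \<Rightarrow> nat \<Rightarrow> nat" where
  "Nn nx ny nz = (nx+1)*(ny+1)*(nz+1)"

text \<open>D_U: diagonal matrix of node potentials U i j k (1-based nodes), node ordering
  i + (j-1)(nx+1) + (k-1)(nx+1)(ny+1).\<close>
definition DU :: "nat \<Rightarrow> nat \<Rightarrow> nat \<Rightarrow> (nat \<Rightarrow> nat \<Rightarrow> nat \<Rightarrow> real) \<Rightarrow> real mat" where
  "DU nx ny nz U = mat_diag (Nn nx ny nz)
     (\<lambda>l. U (l mod (nx+1) + 1) ((l div (nx+1)) mod (ny+1) + 1) (l div ((nx+1)*(ny+1)) + 1))"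

definition DVpp :: "real \<Rightarrow> real \<Rightarrow> real \<Rightarrow> nat \<Rightarrow> nat \<Rightarrow> nat \<Rightarrow> real mat" where
  "DVpp dx dy dz nx ny nz = (dx*dy*dz) \<cdot>\<^sub>m kron (Itil (nz+1)) (kron (Itil (ny+1)) (Itil (nx+1)))"

definition Dx :: "nat \<Rightarrow> nat \<Rightarrow> nat \<Rightarrow> real mat" where
  "Dx nx ny nz = - kron (Im (nz+1)) (kron (Im (ny+1)) (transpose_mat (Wm nx)))"
definition Dy :: "nat \<Rightarrow> nat \<Rightarrow> nat \<Rightarrow> real mat" where
  "Dy nx ny nz = - kron (Im (nz+1)) (kron (transpose_mat (Wm ny)) (Im (nx+1)))"
definition Dz :: "nat \<Rightarrow> nat \<Rightarrow> nat \<Rightarrow> real mat" where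
  "Dz nx ny nz = - kron (transpose_mat (Wm nz)) (kron (Im (ny+1)) (Im (nx+1)))"
definition Dm :: "nat \<Rightarrow> nat \<Rightarrow> nat \<Rightarrow> real mat" where
  "Dm nx ny nz = hcat_list [Dx nx ny nz, Dy nx ny nz, Dz nx ny nz]"

definition DSpp :: "real \<Rightarrow> real \<Rightarrow> real \<Rightarrow> nat \<Rightarrow> nat \<Rightarrow> nat \<Rightarrow> real mat" where
  "DSpp dx dy dz nx ny nz = bdiag_list
     [(dy*dz) \<cdot>\<^sub>m kron (Itil (nz+1)) (kron (Itil (ny+1)) (Im nx)),
      (dx*dz) \<cdot>\<^sub>m kron (Itil (nz+1)) (kron (Im ny) (Itil (nx+1))),
      (dx*dy) \<cdot>\<^sub>m kron (Im nz) (kron (Itil (ny+1)) (Itil (nx+1)))]"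

definition Dlp :: "real \<Rightarrow> real \<Rightarrow> real \<Rightarrow> nat \<Rightarrow> nat \<Rightarrow> nat \<Rightarrow> real mat" where
  "Dlp dx dy dz nx ny nz = bdiag_list
     [dx \<cdot>\<^sub>m Im (nx*(ny+1)*(nz+1)), dy \<cdot>\<^sub>m Im ((nx+1)*ny*(nz+1)), dz \<cdot>\<^sub>m Im ((nx+1)*(ny+1)*nz)]"

definition Hm :: "real \<Rightarrow> real \<Rightarrow> real \<Rightarrow> real \<Rightarrow> real \<Rightarrow> nat \<Rightarrow> nat \<Rightarrow> nat
    \<Rightarrow> (nat \<Rightarrow> nat \<Rightarrow> nat \<Rightarrow> real) \<Rightarrow> real mat" where
  "Hm hbar m dx dy dz nx ny nz U =
     (hbar^2 / (2*m)) \<cdot>\<^sub>m (Dm nx ny nz * DSpp dx dy dz nx ny nz * diag_inv (Dlp dx dy dz nx ny nz)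
        * transpose_mat (Dm nx ny nz))
     + DVpp dx dy dz nx ny nz * DU nx ny nz U"

definition Pm :: "real \<Rightarrow> real \<Rightarrow> real \<Rightarrow> real \<Rightarrow> real \<Rightarrow> real \<Rightarrow> nat \<Rightarrow> nat \<Rightarrow> nat
    \<Rightarrow> (nat \<Rightarrow> nat \<Rightarrow> nat \<Rightarrow> real) \<Rightarrow> real mat" where
  "Pm hbar m dt dx dy dz nx ny nz U =
     (let DV = DVpp dx dy dz nx ny nz; H = Hm hbar m dx dy dz nx ny nz U
      in four_block_mat DV (- (dt/(2*hbar)) \<cdot>\<^sub>m H) (- (dt/(2*hbar)) \<cdot>\<^sub>m H) DV)"

definition Lm :: "nat \<Rightarrow> nat \<Rightarrow> nat \<Rightarrow> real mat" where
  "Lm nx ny nz = hcat_list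
     [kron (Im (nz+1)) (kron (Im (ny+1)) (ev 1 (nx+1))),
      kron (Im (nz+1)) (kron (Im (ny+1)) (ev (nx+1) (nx+1))),
      kron (Im (nz+1)) (kron (ev 1 (ny+1)) (Im (nx+1))),
      kron (Im (nz+1)) (kron (ev (ny+1) (ny+1)) (Im (nx+1))),
      kron (ev 1 (nz+1)) (kron (Im (ny+1)) (Im (nx+1))),
      kron (ev (nz+1) (nz+1)) (kron (Im (ny+1)) (Im (nx+1)))]"

definition Mm :: "nat \<Rightarrow> nat \<Rightarrow> nat \<Rightarrow> nat" where
  "Mm nx ny nz = dim_col (Lm nx ny nz)"

definition Dnhat :: "nat \<Rightarrow> nat \<Rightarrow> nat \<Rightarrow> real mat" where
  "Dnhat nx ny nz = bdiag_list
     [- Im ((ny+1)*(nz+1)), Im ((ny+1)*(nz+1)),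
      - Im ((nx+1)*(nz+1)), Im ((nx+1)*(nz+1)),
      - Im ((nx+1)*(ny+1)), Im ((nx+1)*(ny+1))]"

definition DSbpp :: "real \<Rightarrow> real \<Rightarrow> real \<Rightarrow> nat \<Rightarrow> nat \<Rightarrow> nat \<Rightarrow> real mat" where
  "DSbpp dx dy dz nx ny nz = bdiag_list
     [(dy*dz) \<cdot>\<^sub>m kron (Itil (nz+1)) (Itil (ny+1)),
      (dy*dz) \<cdot>\<^sub>m kron (Itil (nz+1)) (Itil (ny+1)),
      (dx*dz) \<cdot>\<^sub>m kron (Itil (nz+1)) (Itil (nx+1)),
      (dx*dz) \<cdot>\<^sub>m kron (Itil (nz+1)) (Itil (nx+1)),
      (dx*dy) \<cdot>\<^sub>m kron (Itil (ny+1)) (Itil (nx+1)),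
      (dx*dy) \<cdot>\<^sub>m kron (Itil (ny+1)) (Itil (nx+1))]"

definition Hperp :: "real \<Rightarrow> real \<Rightarrow> real \<Rightarrow> real \<Rightarrow> real \<Rightarrow> nat \<Rightarrow> nat \<Rightarrow> nat \<Rightarrow> real mat" where
  "Hperp hbar m dx dy dz nx ny nz =
     (hbar^2 / (2*m)) \<cdot>\<^sub>m (Lm nx ny nz * Dnhat nx ny nz * DSbpp dx dy dz nx ny nz)"

definition J1 :: "real mat" where
  "J1 = mat 2 2 (\<lambda>(i,j). if i = 0 \<and> j = 1 then 1 else if i = 1 \<and> j = 0 then -1 else 0)"

text \<open>psi n = [psiR n; psiI n], where psiI n stands for psi_I^{n-1/2};
  g n = [gR n; gI n], where gI n stands for g_I^{n+1/2}.\<close>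
definition total_prob :: "real mat \<Rightarrow> real vec \<Rightarrow> real vec \<Rightarrow> real" where
  "total_prob P psiR psiI = (psiR @\<^sub>v psiI) \<bullet> (P *\<^sub>v (psiR @\<^sub>v psiI))"

definition prob_current :: "real \<Rightarrow> real mat \<Rightarrow> real vec \<Rightarrow> real vec \<Rightarrow> real vec \<Rightarrow> real vec
    \<Rightarrow> real vec \<Rightarrow> real vec \<Rightarrow> real" where
  "prob_current hbar Hp psiR1 psiI1 psiR0 psiI0 gR gI =
     (2/hbar) * (((1/2) \<cdot>\<^sub>v ((psiR1 @\<^sub>v psiI1) + (psiR0 @\<^sub>v psiI0)))
                   \<bullet> (kron J1 Hp *\<^sub>v (gR @\<^sub>v gI)))"

end

theory Submission
  imports Defs
begin

(* Pair the update of psi_R with psi_R^{n+1} + psi_R^n and the update of psi_I with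
   psi_I^{n+1/2} + psi_I^{n-1/2}. Since D_V'' and H are symmetric, the diagonal blocks of P
   change by (dt/hbar) (psi_R^{n+1} H psi_I^{n+1/2} - psi_R^n H psi_I^{n-1/2}) - dt I_P^{n+1/2},
   and the H-terms are cancelled exactly by the off-diagonal blocks -(dt/2hbar) H of P. Hence
   P^{n+1} - P^n = -dt I_P^{n+1/2}; with the balance law outside the region and I_P = -I_Pdag the
   sum P^n + Pdag^n is constant, and Pdag^n >= 0 gives the bound. *)

definition square_diagonal_mat :: "nat \<Rightarrow> 'a::zero mat \<Rightarrow> bool" where
  "square_diagonal_mat n A \<longleftrightarrow> A \<in> carrier_mat n n \<and> diagonal_mat A"

lemma square_diagonal_mat_diag: "square_diagonal_mat n (mat_diag n f)"
  unfolding square_diagonal_mat_def diagonal_mat_def mat_diag_def by auto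

lemma square_diagonal_mat_one: "square_diagonal_mat n (1\<^sub>m n)"
  unfolding square_diagonal_mat_def diagonal_mat_def by auto

lemma square_diagonal_mat_smult:
  fixes A :: "'a::mult_zero mat"
  shows "square_diagonal_mat n A \<Longrightarrow> square_diagonal_mat n (k \<cdot>\<^sub>m A)"
  unfolding square_diagonal_mat_def diagonal_mat_def by auto

lemma square_diagonal_mat_mult:
  fixes A B :: "'a::semiring_0 mat"
  assumes A: "square_diagonal_mat n A" and B: "square_diagonal_mat n B"
  shows "square_diagonal_mat n (A * B)"
  unfolding square_diagonal_mat_def diagonal_mat_def
proof (intro conjI allI impI)
  show AB: "A * B \<in> carrier_mat n n"
    using A B unfolding square_diagonal_mat_def by auto
  fix i j assume "i < dim_row (A * B)" "j < dim_col (A * B)" "i \<noteq> j"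
  with AB have ij: "i < n" "j < n" "i \<noteq> j" by auto
  have "A $$ (i,k) * B $$ (k,j) = 0" if "k < n" for k
    using A B ij that unfolding square_diagonal_mat_def diagonal_mat_def by (cases "k = i") auto
  then show "(A * B) $$ (i,j) = 0"
    using A B ij unfolding square_diagonal_mat_def by (auto simp: scalar_prod_def)
qed

lemma square_diagonal_mat_kron:
  fixes A B :: "'a::mult_zero mat"
  assumes A: "square_diagonal_mat p A" and B: "square_diagonal_mat q B"
  shows "square_diagonal_mat (p * q) (kron A B)"
  unfolding square_diagonal_mat_def diagonal_mat_def
proof (intro conjI allI impI)
  show AB: "kron A B \<in> carrier_mat (p * q) (p * q)"
    using A B unfolding square_diagonal_mat_def kron_def by auto
  fix i j assume "i < dim_row (kron A B)" "j < dim_col (kron A B)" "i \<noteq> j"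
  with AB have ij: "i < p * q" "j < p * q" "i \<noteq> j" by auto
  then have "q > 0" by (cases q) auto
  with ij have lt: "i div q < p" "j div q < p" "i mod q < q" "j mod q < q"
    by (auto simp: less_mult_imp_div_less mult.commute)
  have "i div q \<noteq> j div q \<or> i mod q \<noteq> j mod q"
    using ij(3) by (metis div_mult_mod_eq)
  then show "kron A B $$ (i,j) = 0"
    using A B lt ij unfolding square_diagonal_mat_def diagonal_mat_def kron_def by auto
qed

lemma square_diagonal_mat_bdiag:
  "square_diagonal_mat p A \<Longrightarrow> square_diagonal_mat q B \<Longrightarrow> square_diagonal_mat (p + q) (bdiag A B)"
  unfolding square_diagonal_mat_def diagonal_mat_def bdiag_def by auto

lemma square_diagonal_mat_transpose:
  "square_diagonal_mat n A \<Longrightarrow> transpose_mat A = A"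
  unfolding square_diagonal_mat_def diagonal_mat_def by (intro eq_matI) (auto, metis)

lemma transpose_smult_mat: "transpose_mat (k \<cdot>\<^sub>m A) = k \<cdot>\<^sub>m transpose_mat A"
  by (intro eq_matI) auto

lemma transpose_sandwich_mat:
  fixes D X :: "'a::comm_semiring_0 mat"
  assumes D: "D \<in> carrier_mat n k" and X: "X \<in> carrier_mat k k" "transpose_mat X = X"
  shows "transpose_mat (D * X * transpose_mat D) = D * X * transpose_mat D"
proof -
  have "transpose_mat (D * X * transpose_mat D) = D * transpose_mat (D * X)"
    using transpose_mult[of "D * X" n k "transpose_mat D" n] D X by auto
  also have "transpose_mat (D * X) = X * transpose_mat D"
    using transpose_mult[OF D X(1)] X(2) by simp
  finally show ?thesis
    using D X by (simp add: assoc_mult_mat[of D n k X k "transpose_mat D" n])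
qed

(* number of primary edges, i.e. of columns of D *)
definition Ne :: "nat \<Rightarrow> nat \<Rightarrow> nat \<Rightarrow> nat" where
  "Ne nx ny nz = nx*(ny+1)*(nz+1) + ((nx+1)*ny*(nz+1) + (nx+1)*(ny+1)*nz)"

lemma square_diagonal_mat_Im: "square_diagonal_mat n (Im n)"
  unfolding Im_def by (rule square_diagonal_mat_one)

lemma square_diagonal_mat_Itil: "square_diagonal_mat n (Itil n)"
  unfolding Itil_def by (rule square_diagonal_mat_diag)

lemma square_diagonal_mat_diag_inv: "square_diagonal_mat (dim_row A) (diag_inv A)"
  unfolding diag_inv_def by (rule square_diagonal_mat_diag)

lemma square_diagonal_mat_DVpp: "square_diagonal_mat (Nn nx ny nz) (DVpp dx dy dz nx ny nz)"
proof -
  have "square_diagonal_mat ((nz+1)*((ny+1)*(nx+1))) (DVpp dx dy dz nx ny nz)"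
    unfolding DVpp_def
    by (intro square_diagonal_mat_smult square_diagonal_mat_kron square_diagonal_mat_Itil)
  then show ?thesis by (simp add: Nn_def ac_simps)
qed

lemma square_diagonal_mat_DU: "square_diagonal_mat (Nn nx ny nz) (DU nx ny nz U)"
  unfolding DU_def by (rule square_diagonal_mat_diag)

lemma square_diagonal_mat_DSpp: "square_diagonal_mat (Ne nx ny nz) (DSpp dx dy dz nx ny nz)"
proof -
  have "square_diagonal_mat ((nz+1)*((ny+1)*nx) + ((nz+1)*(ny*(nx+1)) + nz*((ny+1)*(nx+1))))
          (DSpp dx dy dz nx ny nz)"
    unfolding DSpp_def bdiag_list.simps
    by (intro square_diagonal_mat_bdiag square_diagonal_mat_smult square_diagonal_mat_kron
          square_diagonal_mat_Itil square_diagonal_mat_Im)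
  then show ?thesis by (simp add: Ne_def ac_simps)
qed

lemma square_diagonal_mat_Dlp: "square_diagonal_mat (Ne nx ny nz) (Dlp dx dy dz nx ny nz)"
  unfolding Dlp_def Ne_def bdiag_list.simps
  by (intro square_diagonal_mat_bdiag square_diagonal_mat_smult square_diagonal_mat_Im)

lemma square_diagonal_mat_Dlp_inv:
  "square_diagonal_mat (Ne nx ny nz) (diag_inv (Dlp dx dy dz nx ny nz))"
  using square_diagonal_mat_diag_inv[of "Dlp dx dy dz nx ny nz"]
    square_diagonal_mat_Dlp[of nx ny nz dx dy dz]
  unfolding square_diagonal_mat_def by auto

lemma Dm_carrier: "Dm nx ny nz \<in> carrier_mat (Nn nx ny nz) (Ne nx ny nz)"
  unfolding Dm_def hcat_list.simps carrier_mat_def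
  by (simp add: hcat_def Dx_def Dy_def Dz_def kron_def Wm_def Im_def Nn_def Ne_def algebra_simps)

lemma Hm_carrier: "Hm hbar m dx dy dz nx ny nz U \<in> carrier_mat (Nn nx ny nz) (Nn nx ny nz)"
proof -
  have "DSpp dx dy dz nx ny nz \<in> carrier_mat (Ne nx ny nz) (Ne nx ny nz)"
    "diag_inv (Dlp dx dy dz nx ny nz) \<in> carrier_mat (Ne nx ny nz) (Ne nx ny nz)"
    "DVpp dx dy dz nx ny nz \<in> carrier_mat (Nn nx ny nz) (Nn nx ny nz)"
    "DU nx ny nz U \<in> carrier_mat (Nn nx ny nz) (Nn nx ny nz)"
    using square_diagonal_mat_DSpp square_diagonal_mat_Dlp_inv square_diagonal_mat_DVpp
      square_diagonal_mat_DU
    unfolding square_diagonal_mat_def by auto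
  with Dm_carrier[of nx ny nz] show ?thesis
    unfolding Hm_def by (intro add_carrier_mat smult_carrier_mat mult_carrier_mat) auto
qed

lemma Hm_symmetric: "transpose_mat (Hm hbar m dx dy dz nx ny nz U) = Hm hbar m dx dy dz nx ny nz U"
proof -
  let ?D = "Dm nx ny nz" and ?S = "DSpp dx dy dz nx ny nz" and ?L = "diag_inv (Dlp dx dy dz nx ny nz)"
  let ?VU = "DVpp dx dy dz nx ny nz * DU nx ny nz U"
  let ?N = "Nn nx ny nz" and ?E = "Ne nx ny nz"
  have D: "?D \<in> carrier_mat ?N ?E" by (rule Dm_carrier)
  have L: "square_diagonal_mat ?E ?L" by (rule square_diagonal_mat_Dlp_inv)
  have SL: "square_diagonal_mat ?E (?S * ?L)"
    by (rule square_diagonal_mat_mult[OF square_diagonal_mat_DSpp L])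
  then have SL_carrier: "?S * ?L \<in> carrier_mat ?E ?E"
    unfolding square_diagonal_mat_def by blast
  have VU: "square_diagonal_mat ?N ?VU"
    by (rule square_diagonal_mat_mult[OF square_diagonal_mat_DVpp square_diagonal_mat_DU])
  have assoc: "?D * ?S * ?L * transpose_mat ?D = ?D * (?S * ?L) * transpose_mat ?D"
    using D SL_carrier L square_diagonal_mat_DSpp unfolding square_diagonal_mat_def
    by (simp add: assoc_mult_mat[of ?D ?N ?E ?S ?E ?L ?E])
  show ?thesis
    unfolding Hm_def assoc
    using D SL_carrier VU square_diagonal_mat_transpose[OF SL] square_diagonal_mat_transpose[OF VU]
      transpose_sandwich_mat[OF D SL_carrier]
    unfolding square_diagonal_mat_def
    by (simp add: transpose_add[of _ ?N ?N] transpose_smult_mat)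
qed

lemma Hperp_carrier: "Hperp hbar m dx dy dz nx ny nz \<in> carrier_mat (Nn nx ny nz) (Mm nx ny nz)"
  unfolding Hperp_def Mm_def carrier_mat_def
  by (simp add: Lm_def DSbpp_def Dnhat_def hcat_def bdiag_def kron_def Im_def ev_def Itil_def
      mat_diag_def Nn_def algebra_simps)

lemma smult_mat_mult_vec:
  fixes A :: "'a::comm_semiring_0 mat"
  shows "dim_vec v = dim_col A \<Longrightarrow> (k \<cdot>\<^sub>m A) *\<^sub>v v = k \<cdot>\<^sub>v (A *\<^sub>v v)"
  by (intro eq_vecI) (auto simp: scalar_prod_def sum_distrib_left ac_simps intro!: sum.cong)

lemma scalar_prod_symmetric_mat:
  fixes M :: "'a::comm_semiring_0 mat"
  assumes M: "M \<in> carrier_mat n n" "transpose_mat M = M"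
    and x: "x \<in> carrier_vec n" and y: "y \<in> carrier_vec n"
  shows "x \<bullet> (M *\<^sub>v y) = y \<bullet> (M *\<^sub>v x)"
  using transpose_vec_mult_scalar[OF M(1) y x] M x y by (metis comm_scalar_prod mult_mat_vec_carrier)

lemma scalar_prod_symmetric_mat_diff:
  fixes V :: "'a::comm_ring mat"
  assumes V: "V \<in> carrier_mat n n" "transpose_mat V = V"
    and x: "x \<in> carrier_vec n" and y: "y \<in> carrier_vec n"
  shows "(x + y) \<bullet> (V *\<^sub>v (x - y)) = x \<bullet> (V *\<^sub>v x) - y \<bullet> (V *\<^sub>v y)"
  using V x y scalar_prod_symmetric_mat[OF V y x]
  by (simp add: mult_minus_distrib_mat_vec[of _ n n] add_scalar_prod_distrib[of _ n]
      scalar_prod_minus_distrib[of _ n])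

lemma kron_J1_mult_append:
  fixes Hp :: "real mat"
  assumes "Hp \<in> carrier_mat n k" "gR \<in> carrier_vec k" "gI \<in> carrier_vec k"
  shows "kron J1 Hp *\<^sub>v (gR @\<^sub>v gI) = (Hp *\<^sub>v gI) @\<^sub>v (- (Hp *\<^sub>v gR))"
proof (rule eq_vecI)
  show "dim_vec (kron J1 Hp *\<^sub>v (gR @\<^sub>v gI)) = dim_vec ((Hp *\<^sub>v gI) @\<^sub>v (- (Hp *\<^sub>v gR)))"
    using assms by (simp add: kron_def J1_def)
next
  fix i assume "i < dim_vec ((Hp *\<^sub>v gI) @\<^sub>v (- (Hp *\<^sub>v gR)))"
  then have i: "i < 2 * n" using assms by simp
  have split: "{0..<k+k} = {0..<k} \<union> {k..<k+k}" by auto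
  have shift: "sum f {k..<k+k} = (\<Sum>j\<in>{0..<k}. f (j + k))" for f :: "nat \<Rightarrow> real"
    using sum.shift_bounds_nat_ivl[of _ 0 k k] by simp
  have lower_block: "i div n = 1 \<and> i mod n = i - n" if "\<not> i < n"
    using i that by (simp add: div_nat_eqI le_mod_geq)
  have "(kron J1 Hp *\<^sub>v (gR @\<^sub>v gI)) $ i
       = (\<Sum>j\<in>{0..<k+k}. kron J1 Hp $$ (i,j) * (gR @\<^sub>v gI) $ j)"
    using assms i by (simp add: kron_def J1_def scalar_prod_def mult_mat_vec_def row_def)
  also have "\<dots> = (\<Sum>j\<in>{0..<k}. kron J1 Hp $$ (i,j) * gR $ j)
                  + (\<Sum>j\<in>{0..<k}. kron J1 Hp $$ (i,j+k) * gI $ j)"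
    using assms by (simp add: split sum.union_disjoint shift)
  also have "\<dots> = ((Hp *\<^sub>v gI) @\<^sub>v (- (Hp *\<^sub>v gR))) $ i"
    using assms i lower_block
    by (cases "i < n") (auto simp: kron_def J1_def scalar_prod_def mult_mat_vec_def row_def
        sum_negf[symmetric] intro!: sum.cong)
  finally show "(kron J1 Hp *\<^sub>v (gR @\<^sub>v gI)) $ i = ((Hp *\<^sub>v gI) @\<^sub>v (- (Hp *\<^sub>v gR))) $ i" .
qed

lemma prob_current_eq:
  fixes Hp :: "real mat"
  assumes Hp: "Hp \<in> carrier_mat n k"
    and psi: "a \<in> carrier_vec n" "a' \<in> carrier_vec n" "b \<in> carrier_vec n" "b' \<in> carrier_vec n"
    and g: "gR \<in> carrier_vec k" "gI \<in> carrier_vec k"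
  shows "prob_current hbar Hp a' b' a b gR gI
       = ((a' + a) \<bullet> (Hp *\<^sub>v gI) - (b' + b) \<bullet> (Hp *\<^sub>v gR)) / hbar"
proof -
  have "(a' @\<^sub>v b') + (a @\<^sub>v b) = (a' + a) @\<^sub>v (b' + b)"
    using psi by (intro append_vec_add) auto
  then show ?thesis
    unfolding prob_current_def kron_J1_mult_append[OF Hp g] using Hp psi g
    by (simp add: scalar_prod_append[of _ n _ n]) (simp add: divide_simps)
qed

lemma total_prob_four_block_mat:
  fixes V H :: "real mat"
  assumes V: "V \<in> carrier_mat n n" and H: "H \<in> carrier_mat n n" "transpose_mat H = H"
    and x: "x \<in> carrier_vec n" and y: "y \<in> carrier_vec n"
  shows "total_prob (four_block_mat V (- c \<cdot>\<^sub>m H) (- c \<cdot>\<^sub>m H) V) x y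
       = x \<bullet> (V *\<^sub>v x) + y \<bullet> (V *\<^sub>v y) - 2 * c * (x \<bullet> (H *\<^sub>v y))"
proof -
  have "four_block_mat V (- c \<cdot>\<^sub>m H) (- c \<cdot>\<^sub>m H) V *\<^sub>v (x @\<^sub>v y)
     = (V *\<^sub>v x + (- c \<cdot>\<^sub>m H) *\<^sub>v y) @\<^sub>v ((- c \<cdot>\<^sub>m H) *\<^sub>v x + V *\<^sub>v y)"
    using V H x y by (intro four_block_mat_mult_vec) auto
  then show ?thesis
    unfolding total_prob_def using V H x y scalar_prod_symmetric_mat[OF H y x]
    by (simp add: scalar_prod_append[of _ n _ n] scalar_prod_add_distrib[of _ n] smult_mat_mult_vec)
qed

lemma leapfrog_form_increment:
  fixes V :: "real mat"
  assumes V: "V \<in> carrier_mat n n" "transpose_mat V = V"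
    and x: "x \<in> carrier_vec n" "x' \<in> carrier_vec n"
    and hbar: "hbar \<noteq> 0" and dt: "dt \<noteq> 0"
    and step: "hbar \<cdot>\<^sub>v (V *\<^sub>v ((1/dt) \<cdot>\<^sub>v (x' - x))) = w"
  shows "x' \<bullet> (V *\<^sub>v x') - x \<bullet> (V *\<^sub>v x) = dt / hbar * ((x' + x) \<bullet> w)"
proof -
  have "(x' + x) \<bullet> w = hbar / dt * ((x' + x) \<bullet> (V *\<^sub>v (x' - x)))"
    unfolding step[symmetric] using V x by (simp add: mult_mat_vec[of _ n n])
  then show ?thesis
    using scalar_prod_symmetric_mat_diff[OF V x(2,1)] hbar dt by (simp add: field_simps)
qed

lemma total_prob_leapfrog_step:
  fixes V H Hp :: "real mat"
  assumes V: "V \<in> carrier_mat n n" "transpose_mat V = V"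
    and H: "H \<in> carrier_mat n n" "transpose_mat H = H"
    and Hp: "Hp \<in> carrier_mat n k"
    and psi: "a \<in> carrier_vec n" "a' \<in> carrier_vec n" "b \<in> carrier_vec n" "b' \<in> carrier_vec n"
    and g: "gR \<in> carrier_vec k" "gI \<in> carrier_vec k"
    and hbar: "hbar \<noteq> 0" and dt: "dt \<noteq> 0"
    and stepR: "hbar \<cdot>\<^sub>v (V *\<^sub>v ((1/dt) \<cdot>\<^sub>v (a' - a))) = H *\<^sub>v b' - Hp *\<^sub>v gI"
    and stepI: "hbar \<cdot>\<^sub>v (V *\<^sub>v ((1/dt) \<cdot>\<^sub>v (b' - b))) = - (H *\<^sub>v a) + Hp *\<^sub>v gR"
  shows "total_prob (four_block_mat V (- (dt/(2*hbar)) \<cdot>\<^sub>m H) (- (dt/(2*hbar)) \<cdot>\<^sub>m H) V) a' b'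
       - total_prob (four_block_mat V (- (dt/(2*hbar)) \<cdot>\<^sub>m H) (- (dt/(2*hbar)) \<cdot>\<^sub>m H) V) a b
       = - dt * prob_current hbar Hp a' b' a b gR gI"
proof -
  have incR: "a' \<bullet> (V *\<^sub>v a') - a \<bullet> (V *\<^sub>v a) = dt / hbar * ((a' + a) \<bullet> (H *\<^sub>v b' - Hp *\<^sub>v gI))"
    using leapfrog_form_increment[OF V psi(1,2) hbar dt stepR] .
  have incI: "b' \<bullet> (V *\<^sub>v b') - b \<bullet> (V *\<^sub>v b) = dt / hbar * ((b' + b) \<bullet> (- (H *\<^sub>v a) + Hp *\<^sub>v gR))"
    using leapfrog_form_increment[OF V psi(3,4) hbar dt stepI] .
  have H_sym: "b' \<bullet> (H *\<^sub>v a) = a \<bullet> (H *\<^sub>v b')" "b \<bullet> (H *\<^sub>v a) = a \<bullet> (H *\<^sub>v b)"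
    using scalar_prod_symmetric_mat[OF H] psi by auto
  have pairR: "(a' + a) \<bullet> (H *\<^sub>v b' - Hp *\<^sub>v gI)
      = a' \<bullet> (H *\<^sub>v b') + a \<bullet> (H *\<^sub>v b') - (a' + a) \<bullet> (Hp *\<^sub>v gI)"
    using H Hp psi g by (simp add: scalar_prod_minus_distrib[of _ n] add_scalar_prod_distrib[of _ n])
  have pairI: "(b' + b) \<bullet> (- (H *\<^sub>v a) + Hp *\<^sub>v gR)
      = - (a \<bullet> (H *\<^sub>v b')) - a \<bullet> (H *\<^sub>v b) + (b' + b) \<bullet> (Hp *\<^sub>v gR)"
    using H Hp psi g H_sym
    by (simp add: scalar_prod_add_distrib[of _ n] add_scalar_prod_distrib[of _ n])
  have "total_prob (four_block_mat V (- (dt/(2*hbar)) \<cdot>\<^sub>m H) (- (dt/(2*hbar)) \<cdot>\<^sub>m H) V) a' b'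
       - total_prob (four_block_mat V (- (dt/(2*hbar)) \<cdot>\<^sub>m H) (- (dt/(2*hbar)) \<cdot>\<^sub>m H) V) a b
      = (a' \<bullet> (V *\<^sub>v a') - a \<bullet> (V *\<^sub>v a)) + (b' \<bullet> (V *\<^sub>v b') - b \<bullet> (V *\<^sub>v b))
        - dt / hbar * (a' \<bullet> (H *\<^sub>v b') - a \<bullet> (H *\<^sub>v b))"
    unfolding total_prob_four_block_mat[OF V(1) H psi(2,4)] total_prob_four_block_mat[OF V(1) H psi(1,3)]
    using hbar by (simp add: field_simps)
  also have "\<dots> = - dt * (((a' + a) \<bullet> (Hp *\<^sub>v gI) - (b' + b) \<bullet> (Hp *\<^sub>v gR)) / hbar)"
    unfolding incR incI pairR pairI using hbar by (simp add: field_simps)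
  finally show ?thesis
    unfolding prob_current_eq[OF Hp psi g] .
qed

lemma le_of_conserved_sum:
  fixes p q :: "nat \<Rightarrow> real"
  assumes conserved: "\<And>n. n < N \<Longrightarrow> p (Suc n) + q (Suc n) = p n + q n"
    and q_nonneg: "\<And>n. n \<le> N \<Longrightarrow> q n \<ge> 0"
    and n: "n \<le> N"
  shows "p n \<le> p 0 + q 0"
proof -
  have "p n + q n = p 0 + q 0"
    using n by (induction n) (auto simp: conserved)
  with q_nonneg[OF n] show ?thesis by linarith
qed

theorem lemma2:
  fixes hbar m dx dy dz dt :: real
    and nx ny nz nt :: nat
    and U :: "nat \<Rightarrow> nat \<Rightarrow> nat \<Rightarrow> real"
    and psiR psiI gR gI :: "nat \<Rightarrow> real vec"
    and Pdag Idag :: "nat \<Rightarrow> real"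
  assumes hbar: "hbar > 0" and mpos: "m > 0"
    and dxyz: "dx > 0" "dy > 0" "dz > 0"
    and nxyz: "nx > 0" "ny > 0" "nz > 0" "nt > 0"
    and dtpos: "dt > 0"
    and cfl: "dt * spectral_radius (map_mat complex_of_real
               ((1/hbar) \<cdot>\<^sub>m (diag_inv_sqrt (DVpp dx dy dz nx ny nz) * Hm hbar m dx dy dz nx ny nz U
                   * diag_inv_sqrt (DVpp dx dy dz nx ny nz)))) < 2"
    and dims_psi: "\<forall>n\<le>nt. psiR n \<in> carrier_vec (Nn nx ny nz) \<and> psiI n \<in> carrier_vec (Nn nx ny nz)"
    and dims_g: "\<forall>n<nt. gR n \<in> carrier_vec (Mm nx ny nz) \<and> gI n \<in> carrier_vec (Mm nx ny nz)"
    and eqR: "\<forall>n<nt. hbar \<cdot>\<^sub>v (DVpp dx dy dz nx ny nz *\<^sub>v ((1/dt) \<cdot>\<^sub>v (psiR (Suc n) - psiR n)))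
                 = Hm hbar m dx dy dz nx ny nz U *\<^sub>v psiI (Suc n)
                   - Hperp hbar m dx dy dz nx ny nz *\<^sub>v gI n"
    and eqI: "\<forall>n<nt. hbar \<cdot>\<^sub>v (DVpp dx dy dz nx ny nz *\<^sub>v ((1/dt) \<cdot>\<^sub>v (psiI (Suc n) - psiI n)))
                 = - (Hm hbar m dx dy dz nx ny nz U *\<^sub>v psiR n)
                   + Hperp hbar m dx dy dz nx ny nz *\<^sub>v gR n"
    and Pdag_nonneg: "\<forall>n\<le>nt. Pdag n \<ge> 0"
    and Pdag_cons: "\<forall>n<nt. (Pdag (Suc n) - Pdag n) / dt = - Idag n"
    and current: "\<forall>n<nt. prob_current hbar (Hperp hbar m dx dy dz nx ny nz)
                     (psiR (Suc n)) (psiI (Suc n)) (psiR n) (psiI n) (gR n) (gI n) = - Idag n"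
  shows "\<forall>n\<le>nt. total_prob (Pm hbar m dt dx dy dz nx ny nz U) (psiR n) (psiI n)
                 \<le> total_prob (Pm hbar m dt dx dy dz nx ny nz U) (psiR 0) (psiI 0) + Pdag 0"
proof (intro allI impI)
  fix n assume n: "n \<le> nt"
  let ?V = "DVpp dx dy dz nx ny nz" and ?H = "Hm hbar m dx dy dz nx ny nz U"
  let ?Hp = "Hperp hbar m dx dy dz nx ny nz"
  let ?prob = "\<lambda>j. total_prob (Pm hbar m dt dx dy dz nx ny nz U) (psiR j) (psiI j)"
  have V: "?V \<in> carrier_mat (Nn nx ny nz) (Nn nx ny nz)" "transpose_mat ?V = ?V"
    using square_diagonal_mat_DVpp square_diagonal_mat_transpose
    unfolding square_diagonal_mat_def by blast+
  have conserved: "?prob (Suc j) + Pdag (Suc j) = ?prob j + Pdag j" if j: "j < nt" for j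
  proof -
    have "?prob (Suc j) - ?prob j = - dt * prob_current hbar ?Hp
            (psiR (Suc j)) (psiI (Suc j)) (psiR j) (psiI j) (gR j) (gI j)"
      unfolding Pm_def Let_def
      by (rule total_prob_leapfrog_step[OF V Hm_carrier Hm_symmetric Hperp_carrier])
        (use j dims_psi dims_g eqR eqI hbar dtpos in auto)
    moreover have "Pdag (Suc j) - Pdag j = - dt * Idag j"
      using Pdag_cons j dtpos by (auto simp: field_simps)
    ultimately show ?thesis
      using current j by auto
  qed
  show "?prob n \<le> ?prob 0 + Pdag 0"
    using le_of_conserved_sum[of nt ?prob Pdag n] conserved Pdag_nonneg n by blast
qed

end
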